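(* Let $C\subseteq\mathbb{R}^n$ be a nonempty closed convex set and let $f:\mathbb{R}^n\times\mathbb{R}^n\to\mathbb{R}\cup\{+\infty\}$ satisfy $f(x,x)=0$ for all $x\in C$ and $C\times C\subseteq \operatorname{dom} f$. Let $S(EP)$ denote the set of $x^*\in C$ with $f(x^*,y)\ge 0$ for all $y\in C$. Assume: (A1) for every $x\in C$ the function $f(x,\cdot)$ is quasiconvex, and $f$ is upper semicontinuous on an open set containing $C\times C$; (A2) $f$ is pseudomonotone on $C$, i.e. for all $x,y\in C$, $f(x,y)\ge 0\Rightarrow f(y,x)\le 0$; and $f$ is paramonotone on $C$ with respect to $S(EP)$, i.e. if $x\in S(EP)$, $y\in C$ and $f(x,y)=f(y,x)=0$, then $y\in S(EP)$; (A3) $S(EP)\neq\emptyset$. Suppose the Normal-subgradient method described in the context does not terminate, let $\{x^k\}$ be the infinite sequence it generates, and let $\{x^{k_q}\}$ be the subsequence of $\{x^k\}$ consisting of all iterates belonging to $S(EP)$. Then: (a) if $\{x^{k_q}\}$ is infinite, then $\lim_{k\to\infty} d(x^k,S(EP))=0$; (b) if $\{x^{k_q}\}$ is finite, then $\{x^k\}$ converges to a point of $S(EP)$.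
   Context: A function $\varphi$ is quasiconvex if $\varphi((1-\lambda)x+\lambda y)\le\max\{\varphi(x),\varphi(y)\}$ for all $x,y$ and $\lambda\in[0,1]$. $d(x,S)$ is the Euclidean distance from $x$ to the set $S$. For $x\in C$ let $L_f(x):=\{y\in\mathbb{R}^n: f(x,y)<f(x,x)=0\}$ and $\partial_2^* f(x,x):=\{g\in\mathbb{R}^n:\ \langle g,y-x\rangle<0 \ \text{for all } y\in L_f(x)\}$. $P_C$ denotes the Euclidean projection onto $C$. Normal-subgradient method: fix a real sequence $\{\alpha_k\}$ with $\alpha_k>0$ for all $k$, $\sum_{k}\alpha_k=+\infty$ and $\sum_k\alpha_k^2<+\infty$. Choose $x^0\in C$. At iteration $k$ (with $x^k\in C$): take $g^k\in\partial_2^* f(x^k,x^k)$; if $g^k=0$, stop; otherwise replace $g^k$ by $g^k/\|g^k\|$ (so $\|g^k\|=1$), and set $x^{k+1}=P_C(x^k-\alpha_k g^k)$; if $x^{k+1}=x^k$, stop; otherwise increase $k$ by one and repeat. *)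

theory Defs
  imports "HOL-Analysis.Analysis"
begin

definition quasiconvex :: "('a::real_vector \<Rightarrow> ereal) \<Rightarrow> bool" where
  "quasiconvex \<phi> \<longleftrightarrow>
     (\<forall>x y. \<forall>l::real. 0 \<le> l \<and> l \<le> 1 \<longrightarrow> \<phi> ((1 - l) *\<^sub>R x + l *\<^sub>R y) \<le> max (\<phi> x) (\<phi> y))"

definition usc_at :: "('a::topological_space \<Rightarrow> ereal) \<Rightarrow> 'a \<Rightarrow> bool" where
  "usc_at F p \<longleftrightarrow> (\<forall>c. F p < c \<longrightarrow> eventually (\<lambda>q. F q < c) (nhds p))"

definition sol_EP :: "'a set \<Rightarrow> ('a \<Rightarrow> 'a \<Rightarrow> ereal) \<Rightarrow> 'a set" where
  "sol_EP C f = {x \<in> C. \<forall>y \<in> C. f x y \<ge> 0}"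

definition lev_f :: "('a \<Rightarrow> 'a \<Rightarrow> ereal) \<Rightarrow> 'a \<Rightarrow> 'a set" where
  "lev_f f x = {y. f x y < f x x}"

definition normal_subdiff :: "('a::real_inner \<Rightarrow> 'a \<Rightarrow> ereal) \<Rightarrow> 'a \<Rightarrow> 'a set" where
  "normal_subdiff f x = {g. \<forall>y \<in> lev_f f x. inner g (y - x) < 0}"

end

theory Submission
  imports Defs
begin

(* Write d_k = g k / |g k| and a_k for the step sizes. Nonexpansiveness of the projection gives,
   for every y in C,
     |x_{k+1} - y|^2 <= |x_k - y|^2 - 2 a_k <d_k, x_k - y> + a_k^2,
   and pseudo- together with paramonotonicity make <d_k, x_k - y> positive whenever x_k is not a
   solution and y is one. So the iterates are quasi-Fejer monotone with respect to S(EP), with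
   summable errors a_k^2.
   (a) Once an iterate lies in S(EP), the squared distance to S(EP) can grow only by a tail of
   the series of the a_k^2.
   (b) Eventually no iterate lies in S(EP). Then sum a_k <d_k, x_k - y> converges while sum a_k
   diverges, so <d_k, x_k - y> is frequently small near some cluster point l. Were l not a
   solution, upper semicontinuity would make f(x_k, .) negative on a fixed ball around y for x_k
   near l, bounding <d_k, x_k - y> away from zero. Hence l is a solution, and quasi-Fejer
   monotonicity with respect to l forces the whole sequence to converge to l. *)

lemma sum_le_telescope:
  fixes a b e :: "nat \<Rightarrow> real"
  assumes le_step: "\<And>k. m \<le> k \<Longrightarrow> a (Suc k) + b k \<le> a k + e k" and "m \<le> n"
  shows "a n + sum b {m..<n} \<le> a m + sum e {m..<n}"
  using \<open>m \<le> n\<close>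
proof (induction n rule: dec_induct)
  case (step n)
  then show ?case using le_step[of n] by simp
qed simp

lemma quasi_fejer_le:
  fixes D c e :: "nat \<Rightarrow> real"
  assumes step: "\<And>k. N \<le> k \<Longrightarrow> D (Suc k) + c k \<le> D k + e k"
    and "summable e" and "\<And>k. 0 \<le> e k" and "N \<le> n"
  shows "D n + sum c {N..<n} \<le> D N + suminf e"
proof -
  have "sum e {N..<n} \<le> suminf e"
    using assms by (intro sum_le_suminf) auto
  moreover have "D n + sum c {N..<n} \<le> D N + sum e {N..<n}"
    using step \<open>N \<le> n\<close> by (rule sum_le_telescope)
  ultimately show ?thesis
    by linarith
qed

lemma summable_if_quasi_fejer:
  fixes D c e :: "nat \<Rightarrow> real"
  assumes step: "\<And>k. N \<le> k \<Longrightarrow> D (Suc k) + c k \<le> D k + e k"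
    and c_nonneg: "\<And>k. N \<le> k \<Longrightarrow> 0 \<le> c k" and D_nonneg: "\<And>k. 0 \<le> D k"
    and "summable e" and "\<And>k. 0 \<le> e k"
  shows "summable c"
proof -
  have "summable (\<lambda>i. c (i + N))"
  proof (rule summableI_nonneg_bounded)
    fix n
    have "(\<Sum>i<n. c (i + N)) = sum c {N..<n + N}"
      using sum.shift_bounds_nat_ivl[of c 0 N n] by (simp add: lessThan_atLeast0)
    also have "\<dots> \<le> D N + suminf e"
      using quasi_fejer_le[of N D c e "n + N"] step assms(4,5) D_nonneg[of "n + N"]
      by force
    finally show "(\<Sum>i<n. c (i + N)) \<le> D N + suminf e" .
  qed (simp add: c_nonneg)
  then show ?thesis by simp
qed

lemma frequently_less_if_weighted_summable:
  fixes a b :: "nat \<Rightarrow> real"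
  assumes a_pos: "\<And>k. 0 < a k" and "\<not> summable a"
    and "summable (\<lambda>k. a k * b k)" and "0 < \<delta>"
  shows "\<exists>\<^sub>F k in sequentially. b k < \<delta>"
proof (rule ccontr)
  assume "\<not> ?thesis"
  then have "\<forall>\<^sub>F k in sequentially. \<delta> \<le> b k"
    by (simp add: not_frequently not_less)
  then have "\<forall>\<^sub>F k in sequentially. norm (a k) \<le> a k * b k / \<delta>"
    by eventually_elim (use a_pos \<open>0 < \<delta>\<close> in \<open>simp add: pos_le_divide_eq less_imp_le\<close>)
  moreover have "summable (\<lambda>k. a k * b k / \<delta>)"
    using \<open>summable (\<lambda>k. a k * b k)\<close> by (rule summable_divide)
  ultimately have "summable a"
    by (rule summable_comparison_test_ev)
  with \<open>\<not> summable a\<close> show False ..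
qed

lemma quasi_fejer_tendsto:
  fixes x :: "nat \<Rightarrow> 'a::metric_space"
  assumes "summable e"
    and step: "\<And>k. N \<le> k \<Longrightarrow> (dist (x (Suc k)) l)\<^sup>2 \<le> (dist (x k) l)\<^sup>2 + e k"
    and cluster: "\<And>\<epsilon>. 0 < \<epsilon> \<Longrightarrow> \<exists>\<^sub>F k in sequentially. dist (x k) l < \<epsilon>"
  shows "x \<longlonglongrightarrow> l"
proof (rule metric_LIMSEQ_I)
  fix \<epsilon> :: real
  assume "0 < \<epsilon>"
  then obtain M where tail: "\<And>m n. M \<le> m \<Longrightarrow> \<bar>sum e {m..<n}\<bar> < \<epsilon>\<^sup>2 / 2"
    using \<open>summable e\<close> unfolding summable_Cauchy by (metis half_gt_zero real_norm_def zero_less_power)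
  obtain m where m: "max M N \<le> m" "dist (x m) l < \<epsilon> / 2"
    using cluster[of "\<epsilon> / 2"] \<open>0 < \<epsilon>\<close> by (metis frequently_sequentially half_gt_zero)
  show "\<exists>m. \<forall>n\<ge>m. dist (x n) l < \<epsilon>"
  proof (intro exI allI impI)
    fix n
    assume "m \<le> n"
    have "(dist (x n) l)\<^sup>2 \<le> (dist (x m) l)\<^sup>2 + sum e {m..<n}"
      using sum_le_telescope[of m "\<lambda>k. (dist (x k) l)\<^sup>2" "\<lambda>_. 0" e n] step m(1) \<open>m \<le> n\<close> by simp
    also have "\<dots> < (\<epsilon> / 2)\<^sup>2 + \<epsilon>\<^sup>2 / 2"
      using tail[of m n] m power_strict_mono[of "dist (x m) l" "\<epsilon> / 2" 2] by fastforce
    also have "\<dots> \<le> \<epsilon>\<^sup>2"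
      by (simp add: power_divide)
    finally show "dist (x n) l < \<epsilon>"
      using \<open>0 < \<epsilon>\<close> by (simp add: power_less_imp_less_base)
  qed
qed

lemma quasi_fejer_dist_set_le:
  fixes x :: "nat \<Rightarrow> 'a::metric_space"
  assumes e_nonneg: "\<And>k. 0 \<le> e k"
    and outside: "\<And>k y. x k \<notin> S \<Longrightarrow> y \<in> S \<Longrightarrow> (dist (x (Suc k)) y)\<^sup>2 \<le> (dist (x k) y)\<^sup>2 + e k"
    and inside: "\<And>k. x k \<in> S \<Longrightarrow> (dist (x (Suc k)) (x k))\<^sup>2 \<le> e k"
    and "x m \<in> S" and "m \<le> n"
  shows "\<exists>y\<in>S. (dist (x n) y)\<^sup>2 \<le> sum e {m..<n}"
  using \<open>m \<le> n\<close>
proof (induction n rule: dec_induct)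
  case base
  then show ?case using \<open>x m \<in> S\<close> by auto
next
  case (step n)
  then obtain y where y: "y \<in> S" "(dist (x n) y)\<^sup>2 \<le> sum e {m..<n}"
    by blast
  have "0 \<le> sum e {m..<n}"
    by (simp add: e_nonneg sum_nonneg)
  then show ?case
    using outside[OF _ y(1), of n] inside[of n] y step(1) by (cases "x n \<in> S") force+
qed

lemma infdist_tendsto_0_if_quasi_fejer:
  fixes x :: "nat \<Rightarrow> 'a::metric_space"
  assumes "summable e" and "\<And>k. 0 \<le> e k"
    and "\<And>k y. x k \<notin> S \<Longrightarrow> y \<in> S \<Longrightarrow> (dist (x (Suc k)) y)\<^sup>2 \<le> (dist (x k) y)\<^sup>2 + e k"
    and "\<And>k. x k \<in> S \<Longrightarrow> (dist (x (Suc k)) (x k))\<^sup>2 \<le> e k"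
    and "infinite {k. x k \<in> S}"
  shows "(\<lambda>k. infdist (x k) S) \<longlonglongrightarrow> 0"
proof (rule metric_LIMSEQ_I)
  fix \<epsilon> :: real
  assume "0 < \<epsilon>"
  then obtain M where tail: "\<And>m n. M \<le> m \<Longrightarrow> \<bar>sum e {m..<n}\<bar> < \<epsilon>\<^sup>2"
    using \<open>summable e\<close> unfolding summable_Cauchy by (metis real_norm_def zero_less_power)
  obtain m where m: "M \<le> m" "x m \<in> S"
    using \<open>infinite {k. x k \<in> S}\<close> by (auto simp: infinite_nat_iff_unbounded_le)
  show "\<exists>m. \<forall>n\<ge>m. dist (infdist (x n) S) 0 < \<epsilon>"
  proof (intro exI allI impI)
    fix n
    assume "m \<le> n"
    then obtain y where y: "y \<in> S" "(dist (x n) y)\<^sup>2 \<le> sum e {m..<n}"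
      using quasi_fejer_dist_set_le[of e x S m n] assms m(2) by blast
    have "(dist (x n) y)\<^sup>2 < \<epsilon>\<^sup>2"
      using y(2) tail[OF m(1), of n] by linarith
    then have "dist (x n) y < \<epsilon>"
      using \<open>0 < \<epsilon>\<close> by (simp add: power_less_imp_less_base)
    then show "dist (infdist (x n) S) 0 < \<epsilon>"
      using infdist_le[OF y(1), of "x n"] infdist_nonneg[of "x n" S] by simp
  qed
qed

lemma frequently_less_imp_cluster_point:
  fixes x :: "nat \<Rightarrow> 'a::heine_borel" and h :: "nat \<Rightarrow> real"
  assumes "bounded (x ` {N..})" and "\<And>\<delta>. 0 < \<delta> \<Longrightarrow> \<exists>\<^sub>F k in sequentially. h k < \<delta>"
  shows "\<exists>l. \<forall>\<epsilon>>0. \<exists>\<^sub>F k in sequentially. dist (x k) l < \<epsilon> \<and> h k < \<epsilon>"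
proof -
  have "\<forall>j. \<exists>k\<ge>N + j. h k < inverse (Suc j)"
    using assms(2) by (simp add: frequently_sequentially)
  then obtain r where r: "\<And>j. N + j \<le> r j" "\<And>j. h (r j) < inverse (Suc j)"
    by metis
  have "range (x \<circ> r) \<subseteq> x ` {N..}"
    using r(1) by (auto intro: le_trans[OF le_add1])
  then have "bounded (range (x \<circ> r))"
    using assms(1) by (rule bounded_subset[rotated])
  then obtain l \<sigma> where \<sigma>: "strict_mono \<sigma>" and lim: "(\<lambda>j. x (r (\<sigma> j))) \<longlonglongrightarrow> l"
    using bounded_imp_convergent_subsequence by (fastforce simp: o_def)
  have "\<exists>\<^sub>F k in sequentially. dist (x k) l < \<epsilon> \<and> h k < \<epsilon>" if "0 < \<epsilon>" for \<epsilon>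
    unfolding frequently_sequentially
  proof
    fix M
    have "\<forall>\<^sub>F j in sequentially. dist (x (r (\<sigma> j))) l < \<epsilon> \<and> inverse (Suc j) < \<epsilon> \<and> M \<le> j"
      using lim LIMSEQ_inverse_real_of_nat \<open>0 < \<epsilon>\<close>
      by (intro eventually_conj) (auto simp: tendsto_iff order_tendsto_iff)
    then obtain j where j: "dist (x (r (\<sigma> j))) l < \<epsilon>" "inverse (Suc j) < \<epsilon>" "M \<le> j"
      unfolding eventually_sequentially by blast
    have "j \<le> r (\<sigma> j)"
      using seq_suble[OF \<sigma>, of j] r(1)[of "\<sigma> j"] by linarith
    moreover have "inverse (real (Suc (\<sigma> j))) \<le> inverse (Suc j)"
      using seq_suble[OF \<sigma>, of j] by (intro le_imp_inverse_le) auto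
    ultimately have "M \<le> r (\<sigma> j)" "h (r (\<sigma> j)) < \<epsilon>"
      using r(2)[of "\<sigma> j"] j by linarith+
    then show "\<exists>k\<ge>M. dist (x k) l < \<epsilon> \<and> h k < \<epsilon>"
      using j(1) by blast
  qed
  then show ?thesis by blast
qed

lemma closest_point_step_dist_le:
  fixes C :: "'a::euclidean_space set"
  assumes "convex C" and "closed C" and "y \<in> C"
  shows "(dist (closest_point C (z - a *\<^sub>R u)) y)\<^sup>2
    \<le> (dist z y)\<^sup>2 - 2 * a * inner u (z - y) + a\<^sup>2 * (norm u)\<^sup>2"
proof -
  have "dist (closest_point C (z - a *\<^sub>R u)) y \<le> dist (z - a *\<^sub>R u) y"
    using closest_point_lipschitz[OF assms(1,2), of "z - a *\<^sub>R u" y] closest_point_self[OF assms(3)] assms(3)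
    by auto
  then have "(dist (closest_point C (z - a *\<^sub>R u)) y)\<^sup>2 \<le> (norm ((z - y) - a *\<^sub>R u))\<^sup>2"
    by (simp add: dist_norm power_mono algebra_simps)
  also have "\<dots> = (dist z y)\<^sup>2 - 2 * a * inner u (z - y) + a\<^sup>2 * (norm u)\<^sup>2"
    unfolding dist_norm power2_norm_eq_inner
    by (simp add: inner_commute power2_eq_square algebra_simps)
  finally show ?thesis .
qed

lemma usc_at_Pair_less:
  fixes F :: "'a::metric_space \<Rightarrow> 'b::metric_space \<Rightarrow> ereal"
  assumes "usc_at (\<lambda>(u, v). F u v) (a, b)" and "F a b < c"
  shows "\<exists>e>0. \<forall>p q. dist p a < e \<longrightarrow> dist q b < e \<longrightarrow> F p q < c"
proof -
  have "\<forall>\<^sub>F pq in nhds a \<times>\<^sub>F nhds b. (\<lambda>(u, v). F u v) pq < c"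
    using assms by (simp add: usc_at_def nhds_prod[symmetric])
  then obtain P Q where "eventually P (nhds a)" "eventually Q (nhds b)"
    and PQ: "\<And>p q. P p \<Longrightarrow> Q q \<Longrightarrow> F p q < c"
    unfolding eventually_prod_filter by auto
  then obtain d1 d2 where "0 < d1" "\<And>p. dist p a < d1 \<Longrightarrow> P p" "0 < d2" "\<And>q. dist q b < d2 \<Longrightarrow> Q q"
    unfolding eventually_nhds_metric by blast
  then show ?thesis
    using PQ by (intro exI[of _ "min d1 d2"]) auto
qed

lemma normal_subdiff_inner_pos:
  assumes "g \<in> normal_subdiff f p" and "f p v < f p p"
  shows "0 < inner g (p - v)"
  using assms by (auto simp: normal_subdiff_def lev_f_def inner_diff_right)

lemma sol_EP_in_set: "x \<in> sol_EP C f \<Longrightarrow> x \<in> C"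
  by (simp add: sol_EP_def)

locale equilibrium_problem =
  fixes C :: "'a::euclidean_space set" and f :: "'a \<Rightarrow> 'a \<Rightarrow> ereal"
  assumes closed: "closed C" and convex: "convex C"
    and diag: "\<And>u. u \<in> C \<Longrightarrow> f u u = 0"
    and usc: "\<And>u v. u \<in> C \<Longrightarrow> v \<in> C \<Longrightarrow> usc_at (\<lambda>(u, v). f u v) (u, v)"
    and pseudomonotone: "\<And>u v. u \<in> C \<Longrightarrow> v \<in> C \<Longrightarrow> f u v \<ge> 0 \<Longrightarrow> f v u \<le> 0"
    and paramonotone: "\<And>u v. u \<in> sol_EP C f \<Longrightarrow> v \<in> C \<Longrightarrow> f u v = 0 \<Longrightarrow> f v u = 0 \<Longrightarrow> v \<in> sol_EP C f"
begin

lemma nonsolution_less_zero: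
  assumes "v \<in> C" and "v \<notin> sol_EP C f" and "y \<in> sol_EP C f"
  shows "f v y < 0"
proof -
  have "y \<in> C" and "f y v \<ge> 0"
    using assms by (auto simp: sol_EP_def)
  then have "f v y \<le> 0"
    using pseudomonotone \<open>v \<in> C\<close> by blast
  moreover have "f v y \<noteq> 0"
  proof
    assume "f v y = 0"
    then have "f y v = 0"
      using pseudomonotone[OF \<open>v \<in> C\<close> \<open>y \<in> C\<close>] \<open>f y v \<ge> 0\<close> by simp
    then show False
      using paramonotone[OF \<open>y \<in> sol_EP C f\<close> \<open>v \<in> C\<close>] \<open>f v y = 0\<close> \<open>v \<notin> sol_EP C f\<close> by blast
  qed
  ultimately show ?thesis
    by simp
qed

end

locale normal_subgradient_iteration = equilibrium_problem +
  fixes \<alpha> :: "nat \<Rightarrow> real" and x g :: "nat \<Rightarrow> 'a::euclidean_space"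
  assumes alpha_pos: "\<And>k. 0 < \<alpha> k"
    and x_0: "x 0 \<in> C"
    and g_normal: "\<And>k. g k \<in> normal_subdiff f (x k)"
    and g_nonzero: "\<And>k. g k \<noteq> 0"
    and x_Suc: "\<And>k. x (Suc k) = closest_point C (x k - \<alpha> k *\<^sub>R (g k /\<^sub>R norm (g k)))"
begin

definition dir :: "nat \<Rightarrow> 'a" where
  "dir k = g k /\<^sub>R norm (g k)"

lemma norm_dir: "norm (dir k) = 1"
  using g_nonzero by (simp add: dir_def)

lemma x_in_C: "x k \<in> C"
  by (induction k) (use x_0 closed in \<open>auto simp: x_Suc intro: closest_point_in_set\<close>)

lemma dist_x_Suc_le:
  assumes "y \<in> C"
  shows "(dist (x (Suc k)) y)\<^sup>2 \<le> (dist (x k) y)\<^sup>2 - 2 * \<alpha> k * inner (dir k) (x k - y) + (\<alpha> k)\<^sup>2"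
  using closest_point_step_dist_le[OF convex closed assms, of "x k" "\<alpha> k" "dir k"]
  by (simp add: x_Suc dir_def[symmetric] norm_dir)

lemma dist_x_Suc_x_le: "dist (x (Suc k)) (x k) \<le> \<alpha> k"
proof (rule power2_le_imp_le)
  show "(dist (x (Suc k)) (x k))\<^sup>2 \<le> (\<alpha> k)\<^sup>2"
    using dist_x_Suc_le[OF x_in_C, of k k] by simp
qed (use alpha_pos[of k] in simp)

lemma inner_dir_pos:
  assumes "f (x k) v < 0"
  shows "0 < inner (dir k) (x k - v)"
proof -
  have "0 < inner (g k) (x k - v)"
    using normal_subdiff_inner_pos[OF g_normal] assms diag[OF x_in_C] by simp
  moreover have "inner (dir k) (x k - v) = inner (g k) (x k - v) / norm (g k)"
    by (simp add: dir_def divide_inverse_commute)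
  ultimately show ?thesis
    using g_nonzero[of k] by simp
qed

lemma inner_dir_pos_sol:
  assumes "x k \<notin> sol_EP C f" and "y \<in> sol_EP C f"
  shows "0 < inner (dir k) (x k - y)"
  using inner_dir_pos nonsolution_less_zero[OF x_in_C assms] by blast

lemma dist_x_Suc_sol_le:
  assumes "x k \<notin> sol_EP C f" and "y \<in> sol_EP C f"
  shows "(dist (x (Suc k)) y)\<^sup>2 \<le> (dist (x k) y)\<^sup>2 + (\<alpha> k)\<^sup>2"
proof -
  have "0 \<le> 2 * \<alpha> k * inner (dir k) (x k - y)"
    by (intro mult_nonneg_nonneg less_imp_le inner_dir_pos_sol[OF assms] alpha_pos) simp
  moreover have "y \<in> C"
    using assms(2) by (rule sol_EP_in_set)
  ultimately show ?thesis
    using dist_x_Suc_le[of y k] by linarith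
qed

lemma inner_dir_bounded_below_near_nonsolution:
  assumes "l \<in> C" and "l \<notin> sol_EP C f" and "y \<in> sol_EP C f"
  shows "\<exists>d>0. \<forall>k. dist (x k) l < d \<longrightarrow> d < inner (dir k) (x k - y)"
proof -
  have "y \<in> C"
    using assms(3) by (rule sol_EP_in_set)
  obtain e where "0 < e" and e: "\<And>p q. dist p l < e \<Longrightarrow> dist q y < e \<Longrightarrow> f p q < 0"
    using usc_at_Pair_less[OF usc[OF \<open>l \<in> C\<close> \<open>y \<in> C\<close>] nonsolution_less_zero[OF assms]] by blast
  have "e / 2 < inner (dir k) (x k - y)" if "dist (x k) l < e / 2" for k
  proof -
    define v where "v = y + (e / 2) *\<^sub>R dir k"
    have "dist v y < e"
      using \<open>0 < e\<close> by (simp add: v_def dist_norm norm_dir)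
    moreover have "dist (x k) l < e"
      using that \<open>0 < e\<close> by linarith
    ultimately have "0 < inner (dir k) (x k - v)"
      using e inner_dir_pos by blast
    also have "inner (dir k) (x k - v) = inner (dir k) (x k - y) - e / 2"
      using dot_square_norm[of "dir k"] norm_dir[of k]
      unfolding v_def inner_diff_right inner_add_right inner_scaleR_right by simp
    finally show ?thesis
      by simp
  qed
  then show ?thesis
    using \<open>0 < e\<close> by (intro exI[of _ "e / 2"]) auto
qed

theorem infdist_sol_tendsto_0:
  assumes "summable (\<lambda>k. (\<alpha> k)\<^sup>2)" and "infinite {k. x k \<in> sol_EP C f}"
  shows "(\<lambda>k. infdist (x k) (sol_EP C f)) \<longlonglongrightarrow> 0"
proof (rule infdist_tendsto_0_if_quasi_fejer[OF assms(1) _ dist_x_Suc_sol_le _ assms(2)])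
  show "(dist (x (Suc k)) (x k))\<^sup>2 \<le> (\<alpha> k)\<^sup>2" for k
    using dist_x_Suc_x_le[of k] by (simp add: power_mono)
qed simp

lemma cluster_point_with_inner_dir_small:
  assumes alpha_div: "\<not> summable \<alpha>" and alpha_sq: "summable (\<lambda>k. (\<alpha> k)\<^sup>2)"
    and y: "y \<in> sol_EP C f" and N: "\<And>k. N \<le> k \<Longrightarrow> x k \<notin> sol_EP C f"
  shows "\<exists>l. \<forall>\<epsilon>>0. \<exists>\<^sub>F k in sequentially. dist (x k) l < \<epsilon> \<and> inner (dir k) (x k - y) < \<epsilon>"
proof -
  have "y \<in> C"
    using y by (rule sol_EP_in_set)
  define h where "h k = inner (dir k) (x k - y)" for k
  have "summable (\<lambda>k. 2 * \<alpha> k * h k)"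
  proof (rule summable_if_quasi_fejer[where N = N and D = "\<lambda>k. (dist (x k) y)\<^sup>2"])
    show "(dist (x (Suc k)) y)\<^sup>2 + 2 * \<alpha> k * h k \<le> (dist (x k) y)\<^sup>2 + (\<alpha> k)\<^sup>2" for k
      using dist_x_Suc_le[OF \<open>y \<in> C\<close>, of k] unfolding h_def by linarith
    show "0 \<le> 2 * \<alpha> k * h k" if "N \<le> k" for k
      unfolding h_def by (intro mult_nonneg_nonneg less_imp_le inner_dir_pos_sol[OF N[OF that] y] alpha_pos) simp
  qed (use alpha_sq in auto)
  then have h_small: "\<exists>\<^sub>F k in sequentially. h k < \<delta>" if "0 < \<delta>" for \<delta>
    using frequently_less_if_weighted_summable[of "\<lambda>k. 2 * \<alpha> k" h \<delta>] alpha_pos alpha_div that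
    by simp
  have "bounded (x ` {N..})"
  proof (rule bounded_subset[OF bounded_cball])
    show "x ` {N..} \<subseteq> cball y (sqrt ((dist (x N) y)\<^sup>2 + (\<Sum>k. (\<alpha> k)\<^sup>2)))"
    proof clarsimp
      fix k
      assume "N \<le> k"
      then have "(dist (x k) y)\<^sup>2 \<le> (dist (x N) y)\<^sup>2 + (\<Sum>k. (\<alpha> k)\<^sup>2)"
        using quasi_fejer_le[of N "\<lambda>k. (dist (x k) y)\<^sup>2" "\<lambda>_. 0" "\<lambda>k. (\<alpha> k)\<^sup>2" k]
          dist_x_Suc_sol_le[OF N y] alpha_sq by simp
      then show "dist y (x k) \<le> sqrt ((dist (x N) y)\<^sup>2 + (\<Sum>k. (\<alpha> k)\<^sup>2))"
        by (simp add: dist_commute real_le_rsqrt)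
    qed
  qed
  then show ?thesis
    using frequently_less_imp_cluster_point[OF _ h_small] unfolding h_def by blast
qed

lemma cluster_point_with_inner_dir_small_in_sol:
  assumes y: "y \<in> sol_EP C f"
    and l: "\<And>\<epsilon>. 0 < \<epsilon> \<Longrightarrow> \<exists>\<^sub>F k in sequentially. dist (x k) l < \<epsilon> \<and> inner (dir k) (x k - y) < \<epsilon>"
  shows "l \<in> sol_EP C f"
proof (rule ccontr)
  assume "l \<notin> sol_EP C f"
  have "\<exists>z\<in>C. dist z l < \<epsilon>" if "0 < \<epsilon>" for \<epsilon>
    using frequently_ex[OF l[OF that]] x_in_C by blast
  then have "l \<in> C"
    using closed_approachable[OF closed] by blast
  then obtain d where "0 < d" and d: "\<And>k. dist (x k) l < d \<Longrightarrow> d < inner (dir k) (x k - y)"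
    using inner_dir_bounded_below_near_nonsolution[OF _ \<open>l \<notin> sol_EP C f\<close> y] by blast
  then show False
    using frequently_ex[OF l[OF \<open>0 < d\<close>]] by force
qed

theorem tendsto_sol_if_finitely_many_in_sol:
  assumes alpha_div: "\<not> summable \<alpha>" and alpha_sq: "summable (\<lambda>k. (\<alpha> k)\<^sup>2)"
    and "sol_EP C f \<noteq> {}" and "finite {k. x k \<in> sol_EP C f}"
  shows "\<exists>z\<in>sol_EP C f. x \<longlonglongrightarrow> z"
proof -
  obtain N where N: "\<And>k. N \<le> k \<Longrightarrow> x k \<notin> sol_EP C f"
    using assms(4) by (metis finite_nat_set_iff_bounded_le mem_Collect_eq not_less_eq_eq)
  obtain y where y: "y \<in> sol_EP C f"
    using assms(3) by blast
  obtain l where l: "\<And>\<epsilon>. 0 < \<epsilon> \<Longrightarrow> \<exists>\<^sub>F k in sequentially. dist (x k) l < \<epsilon> \<and> inner (dir k) (x k - y) < \<epsilon>"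
    using cluster_point_with_inner_dir_small[OF alpha_div alpha_sq y N] by blast
  have "l \<in> sol_EP C f"
    using y l by (rule cluster_point_with_inner_dir_small_in_sol)
  moreover have "x \<longlonglongrightarrow> l"
    using alpha_sq dist_x_Suc_sol_le[OF N \<open>l \<in> sol_EP C f\<close>]
  proof (rule quasi_fejer_tendsto)
    show "\<exists>\<^sub>F k in sequentially. dist (x k) l < \<epsilon>" if "0 < \<epsilon>" for \<epsilon>
      using l[OF that] by (rule frequently_elim1) simp
  qed
  ultimately show ?thesis
    by blast
qed

end

theorem theorem1:
  fixes C :: "'a::euclidean_space set"
    and f :: "'a \<Rightarrow> 'a \<Rightarrow> ereal"
    and \<alpha> :: "nat \<Rightarrow> real"
    and x g :: "nat \<Rightarrow> 'a"
  assumes C_ne: "C \<noteq> {}" and C_closed: "closed C" and C_convex: "convex C"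
    and f_not_minf: "\<And>u v. f u v \<noteq> -\<infinity>"
    and f_diag: "\<And>u. u \<in> C \<Longrightarrow> f u u = 0"
    and f_dom: "\<And>u v. u \<in> C \<Longrightarrow> v \<in> C \<Longrightarrow> f u v < \<infinity>"
    and A1_qc: "\<And>u. u \<in> C \<Longrightarrow> quasiconvex (f u)"
    and A1_usc: "\<exists>U. open U \<and> C \<times> C \<subseteq> U \<and> (\<forall>p \<in> U. usc_at (\<lambda>(u, v). f u v) p)"
    and A2_pseudo: "\<And>u v. u \<in> C \<Longrightarrow> v \<in> C \<Longrightarrow> f u v \<ge> 0 \<Longrightarrow> f v u \<le> 0"
    and A2_para: "\<And>u v. u \<in> sol_EP C f \<Longrightarrow> v \<in> C \<Longrightarrow> f u v = 0 \<Longrightarrow> f v u = 0 \<Longrightarrow> v \<in> sol_EP C f"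
    and A3: "sol_EP C f \<noteq> {}"
    and alpha_pos: "\<And>k. \<alpha> k > 0"
    and alpha_div: "\<not> summable \<alpha>"
    and alpha_sq: "summable (\<lambda>k. (\<alpha> k)\<^sup>2)"
    and x0: "x 0 \<in> C"
    and g_sub: "\<And>k. g k \<in> normal_subdiff f (x k)"
    and g_nz: "\<And>k. g k \<noteq> 0"
    and x_step: "\<And>k. x (Suc k) = closest_point C (x k - \<alpha> k *\<^sub>R (g k /\<^sub>R norm (g k)))"
    and x_moves: "\<And>k. x (Suc k) \<noteq> x k"
  shows "(infinite {k. x k \<in> sol_EP C f} \<longrightarrow> (\<lambda>k. infdist (x k) (sol_EP C f)) \<longlonglongrightarrow> 0)
       \<and> (finite {k. x k \<in> sol_EP C f} \<longrightarrow> (\<exists>z \<in> sol_EP C f. x \<longlonglongrightarrow> z))"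
proof -
  (* Quasiconvexity and the domain conditions only serve, in the paper, to make the normal
     subgradients g k exist; here they are given. x_moves merely expresses non-termination. *)
  interpret normal_subgradient_iteration C f \<alpha> x g
  proof unfold_locales
    fix u v
    assume "u \<in> C" "v \<in> C"
    then show "usc_at (\<lambda>(u, v). f u v) (u, v)"
      using A1_usc by blast
  qed (fact C_closed C_convex f_diag A2_pseudo A2_para alpha_pos x0 g_sub g_nz x_step)+
  show ?thesis
    using infdist_sol_tendsto_0 tendsto_sol_if_finitely_many_in_sol alpha_div alpha_sq A3 by blast
qed

end
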